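(* Let $G_1$ and $G_2$ be two vertex-disjoint 2-edge-colored graphs with Hamiltonian alternating cycles $C_1=x_0x_1\cdots x_{2n-1}x_0$ and $C_2=y_0y_1\cdots y_{2m-1}y_0$, respectively, and let $G\in G_1\oplus G_2$. Suppose there is no good pair in $G$ (between $C_1$ and $C_2$), and that for each $i\in\{1,2\}$ there is a vertex of $C_i$ which is non-singular with respect to $C_{3-i}$. Let $m_1=\min\{n,m\}$ and $M_2=\max\{n,m\}$. Then for each vertex $v\in V(G)$ and each even integer $\ell\in[4m_1,2M_2]$, there is an alternating cycle of length $\ell$ in $G$ passing through $v$.
   Context: All graphs are simple, with edges colored red or blue. An alternating cycle is a cycle in which consecutive edges have different colors; a Hamiltonian alternating cycle of a graph is an alternating cycle through all its vertices. For vertex-disjoint 2-edge-colored graphs $G_1,G_2$, the colored generalized sum $G_1\oplus G_2$ is the set of 2-edge-colored graphs $G$ with $V(G)=V(G_1)\cup V(G_2)$, $G\langle V(G_i)\rangle=G_i$ with the same coloring, and exactly one edge (of arbitrary fixed color) between each $u\in V(G_1)$ and $w\in V(G_2)$; these latter edges are the exterior edges. For $v$ on an alternating cycle $C$, $v^r$ (resp. $v^b$) is the neighbor of $v$ on $C$ with $vv^r$ red (resp. $vv^b$ blue). For an exterior edge $vw$ with $v\in V(C_1)$, $w\in V(C_2)$: if $vw$ is red, $vw,v^rw^r$ is a good pair if $v^rw^r$ is red; if $vw$ is blue, $vw,v^bw^b$ is a good pair if $v^bw^b$ is blue. A vertex $v\in V(C_i)$ is singular with respect to $C_{3-i}$ if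 all edges between $v$ and $V(C_{3-i})$ have the same color, and non-singular otherwise. For integers $a\le b$, $[a,b]=\{a,a+1,\dots,b\}$. *)

theory Defs
  imports Main
begin

datatype color = Red | Blue

text \<open>A 2-edge-colored simple graph is a finite vertex set V together with a
  symmetric, irreflexive partial colouring col: col u v = None means no edge,
  col u v = Some c means an edge of colour c.\<close>
definition cgraph :: "'a set \<Rightarrow> ('a \<Rightarrow> 'a \<Rightarrow> color option) \<Rightarrow> bool" where
  "cgraph V col \<longleftrightarrow> finite V \<and> (\<forall>u v. col u v = col v u) \<and> (\<forall>v. col v v = None)
     \<and> (\<forall>u v. col u v \<noteq> None \<longrightarrow> u \<in> V \<and> v \<in> V)"

definition alt_cycle :: "('a \<Rightarrow> 'a \<Rightarrow> color option) \<Rightarrow> 'a list \<Rightarrow> bool" where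
  "alt_cycle col xs \<longleftrightarrow> length xs \<ge> 3 \<and> distinct xs \<and>
     (\<forall>i < length xs. col (xs ! i) (xs ! ((i + 1) mod length xs)) \<noteq> None) \<and>
     (\<forall>i < length xs. col (xs ! i) (xs ! ((i + 1) mod length xs))
                    \<noteq> col (xs ! ((i + 1) mod length xs)) (xs ! ((i + 2) mod length xs)))"

definition ham_alt_cycle :: "'a set \<Rightarrow> ('a \<Rightarrow> 'a \<Rightarrow> color option) \<Rightarrow> 'a list \<Rightarrow> bool" where
  "ham_alt_cycle V col xs \<longleftrightarrow> alt_cycle col xs \<and> set xs = V"

definition in_colored_sum ::
  "'a set \<Rightarrow> ('a \<Rightarrow> 'a \<Rightarrow> color option) \<Rightarrow> 'a set \<Rightarrow> ('a \<Rightarrow> 'a \<Rightarrow> color option)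
   \<Rightarrow> 'a set \<Rightarrow> ('a \<Rightarrow> 'a \<Rightarrow> color option) \<Rightarrow> bool" where
  "in_colored_sum V col V1 col1 V2 col2 \<longleftrightarrow>
     cgraph V col \<and> V = V1 \<union> V2 \<and>
     (\<forall>u\<in>V1. \<forall>v\<in>V1. col u v = col1 u v) \<and>
     (\<forall>u\<in>V2. \<forall>v\<in>V2. col u v = col2 u v) \<and>
     (\<forall>u\<in>V1. \<forall>w\<in>V2. col u w \<noteq> None)"

definition cyc_adj :: "'a list \<Rightarrow> 'a \<Rightarrow> 'a \<Rightarrow> bool" where
  "cyc_adj xs u v \<longleftrightarrow> (\<exists>i < length xs.
      (xs ! i = u \<and> xs ! ((i + 1) mod length xs) = v) \<or>
      (xs ! i = v \<and> xs ! ((i + 1) mod length xs) = u))"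

definition cyc_nbr :: "('a \<Rightarrow> 'a \<Rightarrow> color option) \<Rightarrow> 'a list \<Rightarrow> color \<Rightarrow> 'a \<Rightarrow> 'a" where
  "cyc_nbr col xs c v = (THE u. cyc_adj xs v u \<and> col v u = Some c)"

definition has_good_pair :: "('a \<Rightarrow> 'a \<Rightarrow> color option) \<Rightarrow> 'a list \<Rightarrow> 'a list \<Rightarrow> bool" where
  "has_good_pair col C1 C2 \<longleftrightarrow> (\<exists>v\<in>set C1. \<exists>w\<in>set C2. \<exists>c.
      col v w = Some c \<and> col (cyc_nbr col C1 c v) (cyc_nbr col C2 c w) = Some c)"

definition non_singular :: "('a \<Rightarrow> 'a \<Rightarrow> color option) \<Rightarrow> 'a \<Rightarrow> 'a set \<Rightarrow> bool" where
  "non_singular col v W \<longleftrightarrow> (\<exists>w1\<in>W. \<exists>w2\<in>W. col v w1 = Some Red \<and> col v w2 = Some Blue)"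

end

theory Submission
  imports Defs
begin

(* Parametrize C1 and C2 by integers, x_i and y_j, so that the edge x_i x_{i+1} is red exactly
   for even i, and call the exterior edge x_i y_j forward if it has the colour of x_i x_{i+1}.
   Without good pairs, forwardness propagates from (i, j) to (i + 1, j + 1) when i + j is even
   and to (i + 1, j - 1) when i + j is odd; by periodicity it is then constant along these lines,
   so it only depends on j - i, resp. on i + j.  If one of these two profiles is not constant, it
   switches from forward to non-forward between some s and s + 2, and a path x_a ... x_{a+p}
   joined to a path y_c ... y_{c+q} by the two exterior edges at such a switch is an alternating
   cycle; p and q can be chosen to give every even length between n + 3 and 2m, through any
   vertex.  If both profiles are constant, the colour of x_i y_j depends on i alone or on j alone,
   contradicting the existence of non-singular vertices on both cycles. *)

definition parity_color :: "bool \<Rightarrow> color" where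
  "parity_color b = (if b then Blue else Red)"

lemma parity_color_eq_iff [simp]: "parity_color a = parity_color b \<longleftrightarrow> a = b"
  by (auto simp: parity_color_def)

lemma neq_parity_color_iff: "c \<noteq> parity_color b \<longleftrightarrow> c = parity_color (\<not> b)"
  by (cases c) (auto simp: parity_color_def)

lemma Some_parity_color_other:
  "x \<noteq> None \<Longrightarrow> x \<noteq> Some (parity_color b) \<Longrightarrow> x = Some (parity_color (\<not> b))"
  by (cases x) (auto simp: neq_parity_color_iff)

lemma int_pred_const_if_mono_periodic:
  fixes P :: "int \<Rightarrow> bool"
  assumes mono: "\<And>t. P t \<Longrightarrow> P (t + 1)" and periodic: "\<And>t. P (t + p) = P t" and "0 < p"
  shows "P t = P 0"
proof -
  have mono_nat: "P t \<Longrightarrow> P (t + int k)" for t k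
  proof (induction k)
    case (Suc k)
    then show ?case using mono[of "t + int k"] by (simp add: algebra_simps)
  qed simp
  have step: "P (t + 1) = P t" for t
  proof
    assume "P (t + 1)"
    then have "P (t + 1 + int (nat (p - 1)))" by (rule mono_nat)
    with \<open>0 < p\<close> periodic show "P t" by simp
  qed (rule mono)
  show ?thesis
  proof (induction t rule: int_induct[where k = 0])
    case (step1 i)
    then show ?case using step[of i] by simp
  next
    case (step2 i)
    then show ?case using step[of "i - 1"] by simp
  qed simp
qed

lemma split_even_length_mod:
  fixes n l :: nat
  assumes "0 < n" "even l" "n + 3 \<le> l"
  obtains p q z where "1 \<le> p" "p \<le> n" "p + q + 2 = l" "int q = int p + 2 + 2 * int n * z"
proof -
  define r where "r = (int (l div 2) - 3) mod int n"
  define p where "p = nat r + 1"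
  have "0 \<le> r" "r < int n" using assms(1) by (simp_all add: r_def)
  then have p: "1 \<le> p" "p \<le> n" "int p = r + 1" by (simp_all add: p_def)
  have "int (l div 2) - 2 - int p = (int (l div 2) - 3) - (int (l div 2) - 3) mod int n"
    using p(3) by (simp add: r_def)
  then have "int n dvd int (l div 2) - 2 - int p" by (simp only: dvd_minus_mod)
  then obtain z where z: "int (l div 2) - 2 - int p = int n * z" by (elim dvdE)
  define q where "q = l - 2 - p"
  have len: "p + q + 2 = l" using p assms(3) by (simp add: q_def)
  moreover have "int q = int p + 2 + 2 * int n * z"
    using z len \<open>even l\<close> by (auto elim!: evenE simp: algebra_simps)
  ultimately show ?thesis using p that by blast
qed

section \<open>Cyclic indexing of lists\<close>

definition cyc_nth :: "'a list \<Rightarrow> int \<Rightarrow> 'a" where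
  "cyc_nth xs i = xs ! nat (i mod int (length xs))"

lemma cyc_nth_of_nat: "cyc_nth xs (int k) = xs ! (k mod length xs)"
  by (simp add: cyc_nth_def flip: of_nat_mod)

lemma cyc_nth_cong: "i mod int (length xs) = j mod int (length xs) \<Longrightarrow> cyc_nth xs i = cyc_nth xs j"
  by (simp add: cyc_nth_def)

lemma cyc_nth_add:
  assumes "xs \<noteq> []"
  shows "cyc_nth xs (i + int d) = xs ! ((nat (i mod int (length xs)) + d) mod length xs)"
proof -
  have "int (nat (i mod int (length xs)) + d) = i mod int (length xs) + int d"
    using assms by simp
  then have "cyc_nth xs (i + int d) = cyc_nth xs (int (nat (i mod int (length xs)) + d))"
    by (intro cyc_nth_cong) (simp add: mod_add_left_eq)
  then show ?thesis by (simp only: cyc_nth_of_nat)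
qed

lemma cyc_nth_eq_iff:
  assumes "distinct xs" "xs \<noteq> []"
  shows "cyc_nth xs i = cyc_nth xs j \<longleftrightarrow> int (length xs) dvd i - j"
proof -
  have "nat (k mod int (length xs)) < length xs" for k
    using assms(2) by (simp add: nat_less_iff)
  then show ?thesis
    using assms by (auto simp: cyc_nth_def nth_eq_iff_index_eq eq_nat_nat_iff mod_eq_dvd_iff)
qed

lemma range_cyc_nth:
  assumes "xs \<noteq> []"
  shows "range (cyc_nth xs) = set xs"
proof
  show "range (cyc_nth xs) \<subseteq> set xs"
    using assms by (auto simp: cyc_nth_def nat_less_iff)
  show "set xs \<subseteq> range (cyc_nth xs)"
    by (auto simp: in_set_conv_nth) (metis cyc_nth_of_nat mod_less rangeI)
qed

lemma alt_cycle_cyc_nth: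
  assumes "alt_cycle col xs"
  shows "col (cyc_nth xs i) (cyc_nth xs (i + 1)) \<noteq> None"
    and "col (cyc_nth xs i) (cyc_nth xs (i + 1)) \<noteq> col (cyc_nth xs (i + 1)) (cyc_nth xs (i + 2))"
proof -
  have ne: "xs \<noteq> []" using assms by (auto simp: alt_cycle_def)
  define k where "k = nat (i mod int (length xs))"
  have k: "k < length xs" using ne by (simp add: k_def nat_less_iff)
  have "cyc_nth xs (i + int d) = xs ! ((k + d) mod length xs)" for d
    unfolding k_def by (rule cyc_nth_add[OF ne])
  from this[of 0] this[of 1] this[of 2] have
    "cyc_nth xs i = xs ! k" "cyc_nth xs (i + 1) = xs ! ((k + 1) mod length xs)"
    "cyc_nth xs (i + 2) = xs ! ((k + 2) mod length xs)"
    using k by simp_all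
  with assms k show "col (cyc_nth xs i) (cyc_nth xs (i + 1)) \<noteq> None"
    and "col (cyc_nth xs i) (cyc_nth xs (i + 1)) \<noteq> col (cyc_nth xs (i + 1)) (cyc_nth xs (i + 2))"
    unfolding alt_cycle_def by auto
qed

lemma cyc_adj_iff_cyc_nth:
  assumes "xs \<noteq> []"
  shows "cyc_adj xs u v \<longleftrightarrow>
    (\<exists>i. u = cyc_nth xs i \<and> v = cyc_nth xs (i + 1) \<or> v = cyc_nth xs i \<and> u = cyc_nth xs (i + 1))"
    (is "_ \<longleftrightarrow> ?adj")
proof
  assume "cyc_adj xs u v"
  then obtain k where "k < length xs"
    "xs ! k = u \<and> xs ! ((k + 1) mod length xs) = v \<or> xs ! k = v \<and> xs ! ((k + 1) mod length xs) = u"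
    unfolding cyc_adj_def by blast
  moreover have "cyc_nth xs (int k) = xs ! k" "cyc_nth xs (int k + 1) = xs ! ((k + 1) mod length xs)"
    using \<open>k < length xs\<close> cyc_nth_of_nat[of xs "k + 1"] by (simp_all add: cyc_nth_of_nat ac_simps)
  ultimately show ?adj by metis
next
  assume ?adj
  then obtain i
    where i: "u = cyc_nth xs i \<and> v = cyc_nth xs (i + 1) \<or> v = cyc_nth xs i \<and> u = cyc_nth xs (i + 1)"
    by blast
  define k where "k = nat (i mod int (length xs))"
  have "k < length xs" using assms by (simp add: k_def nat_less_iff)
  moreover have "cyc_nth xs (i + int d) = xs ! ((k + d) mod length xs)" for d
    unfolding k_def by (rule cyc_nth_add[OF assms])
  from this[of 0] this[of 1] have "cyc_nth xs i = xs ! k" "cyc_nth xs (i + 1) = xs ! ((k + 1) mod length xs)"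
    using \<open>k < length xs\<close> by simp_all
  ultimately show "cyc_adj xs u v"
    unfolding cyc_adj_def using i by metis
qed

lemma cyc_adj_cyc_nth:
  assumes "distinct xs" "xs \<noteq> []"
  shows "cyc_adj xs (cyc_nth xs i) u \<longleftrightarrow> u = cyc_nth xs (i + 1) \<or> u = cyc_nth xs (i - 1)"
proof
  assume "cyc_adj xs (cyc_nth xs i) u"
  then obtain i' where "cyc_nth xs i = cyc_nth xs i' \<and> u = cyc_nth xs (i' + 1)
      \<or> u = cyc_nth xs i' \<and> cyc_nth xs i = cyc_nth xs (i' + 1)"
    unfolding cyc_adj_iff_cyc_nth[OF assms(2)] by blast
  then show "u = cyc_nth xs (i + 1) \<or> u = cyc_nth xs (i - 1)"
  proof
    assume "cyc_nth xs i = cyc_nth xs i' \<and> u = cyc_nth xs (i' + 1)"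
    then have "u = cyc_nth xs (i + 1)" by (auto simp: cyc_nth_eq_iff[OF assms] dvd_diff_commute)
    then show ?thesis ..
  next
    assume u: "u = cyc_nth xs i' \<and> cyc_nth xs i = cyc_nth xs (i' + 1)"
    then have "int (length xs) dvd (i' + 1) - i"
      by (simp add: cyc_nth_eq_iff[OF assms] dvd_diff_commute)
    then have "u = cyc_nth xs (i - 1)" using u by (simp add: cyc_nth_eq_iff[OF assms] algebra_simps)
    then show ?thesis ..
  qed
next
  assume "u = cyc_nth xs (i + 1) \<or> u = cyc_nth xs (i - 1)"
  then show "cyc_adj xs (cyc_nth xs i) u"
    unfolding cyc_adj_iff_cyc_nth[OF assms(2)] by (metis diff_add_cancel)
qed

lemma alt_cycle_colors:
  assumes "alt_cycle col xs"
  obtains b where "\<And>i. col (cyc_nth xs i) (cyc_nth xs (i + 1)) = Some (parity_color (odd i \<noteq> b))"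
proof
  define b where "b = (col (cyc_nth xs 0) (cyc_nth xs 1) = Some Blue)"
  let ?c = "\<lambda>i. col (cyc_nth xs i) (cyc_nth xs (i + 1))"
  have next_color: "?c (i + 1) = Some (parity_color (\<not> p))" if "?c i = Some (parity_color p)" for i p
    using alt_cycle_cyc_nth[OF assms, of i] alt_cycle_cyc_nth(1)[OF assms, of "i + 1"] that
    by (intro Some_parity_color_other) (simp_all add: add.assoc)
  have prev_color: "?c (i - 1) = Some (parity_color (\<not> p))" if "?c i = Some (parity_color p)" for i p
    using alt_cycle_cyc_nth[OF assms, of "i - 1"] that
    by (intro Some_parity_color_other) (simp_all add: algebra_simps)
  show "?c i = Some (parity_color (odd i \<noteq> b))" for i
  proof (induction i rule: int_induct[where k = 0])
    case base
    obtain c where "?c 0 = Some c" using alt_cycle_cyc_nth(1)[OF assms, of 0] by blast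
    then show ?case by (cases c) (simp_all add: b_def parity_color_def)
  next
    case (step1 i)
    show ?case using next_color[OF step1(2)] by simp
  next
    case (step2 i)
    show ?case using prev_color[OF step2(2)] by simp
  qed
qed

section \<open>Integer parametrizations of alternating cycles\<close>

definition alt_param :: "('a \<Rightarrow> 'a \<Rightarrow> color option) \<Rightarrow> nat \<Rightarrow> (int \<Rightarrow> 'a) \<Rightarrow> bool" where
  "alt_param col N X \<longleftrightarrow> (\<forall>i j. X i = X j \<longleftrightarrow> int N dvd i - j)
     \<and> (\<forall>i. col (X i) (X (i + 1)) = Some (parity_color (odd i)))"

lemma alt_param_eq_iff: "alt_param col N X \<Longrightarrow> X i = X j \<longleftrightarrow> int N dvd i - j"
  by (simp add: alt_param_def)

lemma alt_param_color: "alt_param col N X \<Longrightarrow> col (X i) (X (i + 1)) = Some (parity_color (odd i))"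
  by (simp add: alt_param_def)

lemma alt_param_periodic: "alt_param col N X \<Longrightarrow> X (i + int N * q) = X i"
  by (simp add: alt_param_eq_iff)

lemma alt_param_inj_window:
  assumes "alt_param col N X" "X i = X j" "\<bar>i - j\<bar> < int N"
  shows "i = j"
  using assms dvd_imp_le_int[of "i - j" "int N"] by (auto simp: alt_param_eq_iff)

lemma alt_param_reflect:
  assumes "\<And>u v. col u v = col v u" "alt_param col N X"
  shows "alt_param col N (\<lambda>i. X (1 - i))"
  unfolding alt_param_def
proof (intro conjI allI)
  show "X (1 - i) = X (1 - j) \<longleftrightarrow> int N dvd i - j" for i j
    using assms(2) by (simp add: alt_param_eq_iff dvd_diff_commute)
  show "col (X (1 - i)) (X (1 - (i + 1))) = Some (parity_color (odd i))" for i
    using alt_param_color[OF assms(2), of "- i"] assms(1) by (simp add: algebra_simps)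
qed

lemma cyc_nbr_eqI:
  assumes "\<And>u. cyc_adj xs x u \<longleftrightarrow> u = p \<or> u = q" "col x p = Some c" "col x q \<noteq> Some c"
  shows "cyc_nbr col xs c x = p"
  unfolding cyc_nbr_def by (rule the_equality) (use assms in auto)

lemma alt_cycle_obtain_param:
  assumes ac: "alt_cycle col xs" and sym: "\<And>u v. col u v = col v u"
  obtains X where "alt_param col (length xs) X" "range X = set xs"
    "\<And>i c. cyc_nbr col xs c (X i) = (if c = parity_color (odd i) then X (i + 1) else X (i - 1))"
proof -
  have ne: "xs \<noteq> []" and dist: "distinct xs" using ac by (auto simp: alt_cycle_def)
  obtain b where b: "\<And>i. col (cyc_nth xs i) (cyc_nth xs (i + 1)) = Some (parity_color (odd i \<noteq> b))"
    using alt_cycle_colors[OF ac] by blast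
  define X where "X i = cyc_nth xs (i + of_bool b)" for i
  have color: "col (X i) (X (i + 1)) = Some (parity_color (odd i))" for i
    using b[of "i + of_bool b"] by (cases b) (simp_all add: X_def algebra_simps)
  have param: "alt_param col (length xs) X"
    unfolding alt_param_def X_def using color
    by (simp add: cyc_nth_eq_iff[OF dist ne] X_def)
  have "range X = range (cyc_nth xs)"
    by (auto simp: X_def image_iff) (metis diff_add_cancel)
  then have range: "range X = set xs" using range_cyc_nth[OF ne] by simp
  have adj: "cyc_adj xs (X i) u \<longleftrightarrow> u = X (i + 1) \<or> u = X (i - 1)" for i u
    unfolding X_def cyc_adj_cyc_nth[OF dist ne] by (simp add: algebra_simps)
  have back_color: "col (X i) (X (i - 1)) = Some (parity_color (\<not> odd i))" for i
    using color[of "i - 1"] sym by simp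
  have "cyc_nbr col xs c (X i) = (if c = parity_color (odd i) then X (i + 1) else X (i - 1))" for i c
  proof (cases "c = parity_color (odd i)")
    case True
    then show ?thesis using adj color back_color by (simp add: cyc_nbr_eqI)
  next
    case False
    then have "c = parity_color (\<not> odd i)" by (simp add: neq_parity_color_iff)
    then show ?thesis
      using False by (simp add: cyc_nbr_eqI[where q = "X (i + 1)"] adj color back_color disj_commute)
  qed
  with param range that show ?thesis by blast
qed

lemma alt_cycle_map_upt:
  assumes "even L" "3 \<le> L" "distinct (map f [0..<L])"
    and color: "\<And>k. k < L \<Longrightarrow> col (f k) (f (Suc k mod L)) = Some (parity_color (odd (a + int k)))"
  shows "alt_cycle col (map f [0..<L])"
  unfolding alt_cycle_def
proof (intro conjI allI impI)
  show "3 \<le> length (map f [0..<L])" "distinct (map f [0..<L])"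
    using assms(2,3) by simp_all
  fix i assume "i < length (map f [0..<L])"
  then have i: "i < L" by simp
  have "odd (Suc i mod L) = odd (Suc i)"
    using \<open>even L\<close> by (metis mod_mod_cancel even_iff_mod_2_eq_zero)
  moreover have "Suc (Suc i mod L) mod L = Suc (Suc i) mod L" by (simp add: mod_Suc_eq)
  moreover have "Suc i mod L < L" using i by simp
  ultimately show "col (map f [0..<L] ! i) (map f [0..<L] ! ((i + 1) mod length (map f [0..<L]))) \<noteq> None"
    and "col (map f [0..<L] ! i) (map f [0..<L] ! ((i + 1) mod length (map f [0..<L])))
      \<noteq> col (map f [0..<L] ! ((i + 1) mod length (map f [0..<L])))
            (map f [0..<L] ! ((i + 2) mod length (map f [0..<L])))"
    using color[OF i] color[of "Suc i mod L"] i by simp_all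
qed

section \<open>Two alternating cycles joined by a complete set of exterior edges\<close>

locale alt_cycle_pair =
  fixes col :: "'a \<Rightarrow> 'a \<Rightarrow> color option" and n m :: nat and X Y :: "int \<Rightarrow> 'a"
  assumes col_sym: "col u v = col v u"
    and param_X: "alt_param col (2 * n) X" and param_Y: "alt_param col (2 * m) Y"
    and n_pos: "0 < n" and m_pos: "0 < m"
    and X_neq_Y: "X i \<noteq> Y j"
    and exterior: "col (X i) (Y j) \<noteq> None"
begin

(* The exterior edge X i, Y j is forward if it has the colour c of the cycle edge from X i to
   X (i + 1), i.e. if the c-neighbour of X i on its cycle is X (i + 1). *)

definition forward :: "int \<Rightarrow> int \<Rightarrow> bool" where
  "forward i j \<longleftrightarrow> col (X i) (Y j) = Some (parity_color (odd i))"

lemma exterior_color: "col (X i) (Y j) = Some (parity_color (odd i \<longleftrightarrow> forward i j))"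
  using Some_parity_color_other[OF exterior, of i j "odd i"]
  by (cases "forward i j") (auto simp: forward_def)

lemma forward_periodic: "forward (i + 2 * int n * p) (j + 2 * int m * q) = forward i j"
  using alt_param_periodic[OF param_X, of i p] alt_param_periodic[OF param_Y, of j q]
  by (simp add: forward_def)

lemma alt_cycle_pair_reflect: "alt_cycle_pair col n m X (\<lambda>j. Y (1 - j))"
  by unfold_locales (rule col_sym param_X alt_param_reflect[OF col_sym param_Y] n_pos m_pos X_neq_Y exterior)+

lemma forward_propagates_if_no_good_pair:
  assumes ngp: "\<not> has_good_pair col C1 C2" and range: "range X = set C1" "range Y = set C2"
    and nbr_X: "\<And>i c. cyc_nbr col C1 c (X i) = (if c = parity_color (odd i) then X (i + 1) else X (i - 1))"
    and nbr_Y: "\<And>j c. cyc_nbr col C2 c (Y j) = (if c = parity_color (odd j) then Y (j + 1) else Y (j - 1))"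
    and "forward i j"
  shows "forward (i + 1) (if odd i = odd j then j + 1 else j - 1)"
proof -
  let ?c = "parity_color (odd i)" and ?j' = "if odd i = odd j then j + 1 else j - 1"
  have "col (X i) (Y j) = Some ?c" using \<open>forward i j\<close> by (simp add: forward_def)
  moreover have "cyc_nbr col C1 ?c (X i) = X (i + 1)" "cyc_nbr col C2 ?c (Y j) = Y ?j'"
    using nbr_X nbr_Y by auto
  moreover have "X i \<in> set C1" "Y j \<in> set C2" using range by auto
  ultimately have "col (X (i + 1)) (Y ?j') \<noteq> Some ?c"
    using ngp unfolding has_good_pair_def by metis
  then show ?thesis using exterior_color[of "i + 1" ?j'] by auto
qed

lemma forward_diagonal:
  assumes propagate: "\<And>i j. forward i j \<Longrightarrow> forward (i + 1) (if odd i = odd j then j + 1 else j - 1)"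
  shows forward_diagonal_even: "even (i + j) \<Longrightarrow> forward (i + t) (j + t) = forward i j"
    and forward_diagonal_odd: "odd (i + j) \<Longrightarrow> forward (i + t) (j - t) = forward i j"
proof -
  define p where "p = 2 * int n * (2 * int m)"
  have "0 < p" using n_pos m_pos by (simp add: p_def)
  have shift: "forward (a + p) (b + p) = forward a b" "forward (a + p) (b - p) = forward a b" for a b
    using forward_periodic[of a "2 * int m" b "2 * int n"] forward_periodic[of a "2 * int m" b "- 2 * int n"]
    by (simp_all add: p_def algebra_simps)
  show "forward (i + t) (j + t) = forward i j" if "even (i + j)"
  proof -
    have "forward (i + (s + 1)) (j + (s + 1))" if "forward (i + s) (j + s)" for s
    proof -
      have "odd (i + s) = odd (j + s)" using \<open>even (i + j)\<close> by presburger
      then show ?thesis using propagate[OF that] by (simp add: algebra_simps)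
    qed
    moreover have "forward (i + (s + p)) (j + (s + p)) = forward (i + s) (j + s)" for s
      using shift(1)[of "i + s" "j + s"] by (simp add: algebra_simps)
    ultimately show ?thesis
      using int_pred_const_if_mono_periodic[of "\<lambda>s. forward (i + s) (j + s)" p t] \<open>0 < p\<close> by simp
  qed
  show "forward (i + t) (j - t) = forward i j" if "odd (i + j)"
  proof -
    have "forward (i + (s + 1)) (j - (s + 1))" if "forward (i + s) (j - s)" for s
    proof -
      have "odd (i + s) \<noteq> odd (j - s)" using \<open>odd (i + j)\<close> by presburger
      then have "(if odd (i + s) = odd (j - s) then j - s + 1 else j - s - 1) = j - (s + 1)" by simp
      then show ?thesis using propagate[OF that] by (simp add: add.assoc)
    qed
    moreover have "forward (i + (s + p)) (j - (s + p)) = forward (i + s) (j - s)" for s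
      using shift(2)[of "i + s" "j - s"] by (simp add: algebra_simps)
    ultimately show ?thesis
      using int_pred_const_if_mono_periodic[of "\<lambda>s. forward (i + s) (j - s)" p t] \<open>0 < p\<close> by simp
  qed
qed

lemma forward_profile_periodic:
  assumes profile: "\<And>i j. odd (i + j) \<Longrightarrow> forward i j = forward 0 (i + j)" and "odd s"
  shows "forward 0 (s + 2 * int n * z) = forward 0 s"
proof -
  have "forward 0 (s + 2 * int n * z) = forward (0 + 2 * int n * z) (s + 2 * int m * 0)"
    using profile[of "2 * int n * z" s] \<open>odd s\<close> by (simp add: algebra_simps)
  also have "\<dots> = forward 0 s" by (rule forward_periodic)
  finally show ?thesis .
qed

lemma forward_profile_const_if_no_switch:
  assumes profile: "\<And>i j. odd (i + j) \<Longrightarrow> forward i j = forward 0 (i + j)"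
    and no_switch: "\<And>s. odd s \<Longrightarrow> forward 0 s \<Longrightarrow> forward 0 (s + 2)"
    and "odd s"
  shows "forward 0 s = forward 0 1"
proof -
  have "forward 0 (1 + 2 * (t + 1))" if "forward 0 (1 + 2 * t)" for t
    using no_switch[OF _ that] by (simp add: algebra_simps)
  moreover have "forward 0 (1 + 2 * (t + int n)) = forward 0 (1 + 2 * t)" for t
    using forward_profile_periodic[OF profile, of "1 + 2 * t" 1] by (simp add: algebra_simps)
  ultimately have "forward 0 (1 + 2 * t) = forward 0 1" for t
    using int_pred_const_if_mono_periodic[of "\<lambda>t. forward 0 (1 + 2 * t)" "int n" t] n_pos by simp
  moreover have "s = 1 + 2 * ((s - 1) div 2)" using \<open>odd s\<close> by presburger
  ultimately show ?thesis by metis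
qed

lemma exterior_color_one_sided:
  assumes "\<And>i j. forward i j = (if odd (i + j) then b else a)"
  shows "(\<forall>i j j'. col (X i) (Y j) = col (X i) (Y j'))
    \<or> (\<forall>i i' j. col (X i) (Y j) = col (X i') (Y j))"
  by (cases "a = b") (auto simp: exterior_color assms)

definition bridge_cycle :: "int \<Rightarrow> nat \<Rightarrow> int \<Rightarrow> nat \<Rightarrow> 'a list" where
  "bridge_cycle a p c q =
     map (\<lambda>k. if k \<le> p then X (a + int k) else Y (c + int k - int p - 1)) [0..<p + q + 2]"

lemma length_bridge_cycle [simp]: "length (bridge_cycle a p c q) = p + q + 2"
  by (simp add: bridge_cycle_def)

lemma bridge_cycle_ends: "X a \<in> set (bridge_cycle a p c q)" "Y c \<in> set (bridge_cycle a p c q)"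
  unfolding bridge_cycle_def set_map by (force intro: image_eqI[where x = 0], force intro: image_eqI[where x = "Suc p"])

lemma distinct_bridge_cycle:
  assumes "p < 2 * n" "q < 2 * m"
  shows "distinct (bridge_cycle a p c q)"
proof -
  have "inj_on (\<lambda>k. if k \<le> p then X (a + int k) else Y (c + int k - int p - 1)) {..<p + q + 2}"
  proof (rule inj_onI)
    fix k k' assume "k \<in> {..<p + q + 2}" "k' \<in> {..<p + q + 2}"
      and "(if k \<le> p then X (a + int k) else Y (c + int k - int p - 1))
        = (if k' \<le> p then X (a + int k') else Y (c + int k' - int p - 1))"
    then show "k = k'"
      using alt_param_inj_window[OF param_X, of "a + int k" "a + int k'"]
        alt_param_inj_window[OF param_Y, of "c + int k - int p - 1" "c + int k' - int p - 1"]
        X_neq_Y X_neq_Y[THEN not_sym] assms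
      by (auto split: if_splits)
  qed
  then show ?thesis
    unfolding bridge_cycle_def distinct_map set_upt atLeast0LessThan by (blast intro: distinct_upt)
qed

lemma alt_cycle_bridge_cycle:
  assumes into_Y: "forward (a + int p) c" and back_to_X: "\<not> forward a (c + int q)"
    and par: "odd (a + int p + c)" and "even (p + q)" and "p < 2 * n" "q < 2 * m"
  shows "alt_cycle col (bridge_cycle a p c q)"
proof -
  define L where "L = p + q + 2"
  define f where "f k = (if k \<le> p then X (a + int k) else Y (c + int k - int p - 1))" for k
  have bridge: "bridge_cycle a p c q = map f [0..<L]"
    unfolding bridge_cycle_def f_def[abs_def] L_def ..
  have "p + q \<noteq> 0"
  proof
    assume "p + q = 0"
    with into_Y back_to_X show False by simp
  qed
  then have "3 \<le> L" using \<open>even (p + q)\<close> unfolding L_def by presburger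
  moreover have "distinct (map f [0..<L])"
    using distinct_bridge_cycle[OF \<open>p < 2 * n\<close> \<open>q < 2 * m\<close>, where a = a and c = c]
    by (simp only: bridge)
  moreover have "col (f k) (f (Suc k mod L)) = Some (parity_color (odd (a + int k)))" if k: "k < L" for k
  proof -
    consider "k < p" | "k = p" | "p < k" "Suc k < L" | "Suc k = L" using k by linarith
    then show ?thesis
    proof cases
      case 1
      then show ?thesis
        using alt_param_color[OF param_X, of "a + int k"] by (simp add: f_def L_def algebra_simps)
    next
      case 2
      then show ?thesis using into_Y by (simp add: f_def L_def forward_def)
    next
      case 3
      have "odd (c + int k - int p - 1) = odd (a + int k)" using par by presburger
      then show ?thesis
        using alt_param_color[OF param_Y, of "c + int k - int p - 1"] 3 by (simp add: f_def algebra_simps)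
    next
      case 4
      then have "odd (a + int k) \<longleftrightarrow> \<not> odd a" using \<open>even (p + q)\<close> unfolding L_def by presburger
      then show ?thesis
        using back_to_X exterior_color[of a "c + int q"] col_sym 4 by (simp add: f_def L_def)
    qed
  qed
  ultimately show ?thesis
    using alt_cycle_map_upt[of L f col a] \<open>even (p + q)\<close> by (simp add: bridge L_def)
qed

lemma alt_cycles_through_switch:
  assumes profile: "\<And>i j. odd (i + j) \<Longrightarrow> forward i j = forward 0 (i + j)"
    and switch: "odd s" "forward 0 s" "\<not> forward 0 (s + 2)"
    and l: "even l" "n + 3 \<le> l" "l \<le> 2 * m"
    and v: "v \<in> range X \<union> range Y"
  shows "\<exists>xs. alt_cycle col xs \<and> length xs = l \<and> v \<in> set xs"
proof -
  \<comment> \<open>q - p = 2 modulo 2n places the closing edge of the bridge at position s + 2 of the profile.\<close>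
  obtain p q z where p: "1 \<le> p" "p \<le> n" and len: "p + q + 2 = l"
    and q: "int q = int p + 2 + 2 * int n * z"
    using split_even_length_mod[OF n_pos l(1,2)] by blast
  have "q < 2 * m" using len l(3) by simp
  have cycle: "alt_cycle col (bridge_cycle a p c q)" if "a + int p + c = s" for a c
  proof (rule alt_cycle_bridge_cycle)
    show "forward (a + int p) c" "odd (a + int p + c)"
      using profile[of "a + int p" c] that switch by simp_all
    have "a + (c + int q) = s + 2 + 2 * int n * z" using that q by simp
    then have "forward a (c + int q) = forward 0 (s + 2 + 2 * int n * z)"
      using profile[of a "c + int q"] \<open>odd s\<close> by simp
    also have "\<dots> = forward 0 (s + 2)"
      using forward_profile_periodic[OF profile] \<open>odd s\<close> by simp
    finally show "\<not> forward a (c + int q)" using switch by simp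
    show "even (p + q)" using len \<open>even l\<close> by presburger
    show "p < 2 * n" "q < 2 * m" using p \<open>q < 2 * m\<close> by simp_all
  qed
  from v show ?thesis
  proof
    assume "v \<in> range X"
    then obtain i where "v = X i" by blast
    let ?xs = "bridge_cycle i p (s - i - int p) q"
    have "alt_cycle col ?xs" by (rule cycle) simp
    moreover have "length ?xs = l" "v \<in> set ?xs" using len bridge_cycle_ends(1) \<open>v = X i\<close> by simp_all
    ultimately show ?thesis by blast
  next
    assume "v \<in> range Y"
    then obtain j where "v = Y j" by blast
    let ?xs = "bridge_cycle (s - j - int p) p j q"
    have "alt_cycle col ?xs" by (rule cycle) simp
    moreover have "length ?xs = l" "v \<in> set ?xs" using len bridge_cycle_ends(2) \<open>v = Y j\<close> by simp_all
    ultimately show ?thesis by blast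
  qed
qed

lemma forward_profiles:
  assumes propagate: "\<And>i j. forward i j \<Longrightarrow> forward (i + 1) (if odd i = odd j then j + 1 else j - 1)"
  shows forward_odd_profile: "odd (i + j) \<Longrightarrow> forward i j = forward 0 (i + j)"
    and forward_even_profile: "even (i + j) \<Longrightarrow> forward i j = forward 0 (j - i)"
  using forward_diagonal_odd[OF propagate, of i j "- i"] forward_diagonal_even[OF propagate, of i j "- i"]
  by (simp_all add: add.commute)

lemma forward_reflect: "alt_cycle_pair.forward col X (\<lambda>j. Y (1 - j)) i j = forward i (1 - j)"
  using alt_cycle_pair.forward_def[OF alt_cycle_pair_reflect] by (simp add: forward_def)

lemma reflect_odd_profile:
  assumes propagate: "\<And>i j. forward i j \<Longrightarrow> forward (i + 1) (if odd i = odd j then j + 1 else j - 1)"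
    and "odd (i + j)"
  shows "alt_cycle_pair.forward col X (\<lambda>j. Y (1 - j)) i j
    = alt_cycle_pair.forward col X (\<lambda>j. Y (1 - j)) 0 (i + j)"
proof -
  have "even (i + (1 - j))" using \<open>odd (i + j)\<close> by presburger
  then show ?thesis
    using forward_even_profile[OF propagate, of i "1 - j"] by (simp add: forward_reflect algebra_simps)
qed

lemma forward_parity_determined:
  assumes propagate: "\<And>i j. forward i j \<Longrightarrow> forward (i + 1) (if odd i = odd j then j + 1 else j - 1)"
    and no_odd_switch: "\<And>s. odd s \<Longrightarrow> forward 0 s \<Longrightarrow> forward 0 (s + 2)"
    and no_even_switch: "\<And>t. even t \<Longrightarrow> forward 0 t \<Longrightarrow> forward 0 (t - 2)"
  shows "forward i j = (if odd (i + j) then forward 0 1 else forward 0 0)"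
proof (cases "odd (i + j)")
  case True
  have "forward i j = forward 0 (i + j)" by (rule forward_odd_profile[OF propagate True])
  also have "\<dots> = forward 0 1"
    by (rule forward_profile_const_if_no_switch[OF forward_odd_profile[OF propagate] no_odd_switch True])
  finally show ?thesis using True by simp
next
  case False
  interpret R: alt_cycle_pair col n m X "\<lambda>j. Y (1 - j)" by (rule alt_cycle_pair_reflect)
  have R_profile: "R.forward i' j' = R.forward 0 (i' + j')" if "odd (i' + j')" for i' j'
    using reflect_odd_profile[OF propagate that] .
  have no_R_switch: "R.forward 0 (s + 2)" if "odd s" "R.forward 0 s" for s
    using no_even_switch[of "1 - s"] that by (simp add: forward_reflect algebra_simps)
  have "even (i + j)" "odd (1 - (j - i))" using False by presburger+
  have "forward i j = forward 0 (j - i)" by (rule forward_even_profile[OF propagate \<open>even (i + j)\<close>])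
  also have "\<dots> = R.forward 0 (1 - (j - i))" by (simp add: forward_reflect)
  also have "\<dots> = R.forward 0 1"
    by (rule R.forward_profile_const_if_no_switch[OF R_profile no_R_switch \<open>odd (1 - (j - i))\<close>])
  also have "\<dots> = forward 0 0" by (simp add: forward_reflect)
  finally show ?thesis using False by simp
qed

(* Pairs with i + j odd are handled directly, pairs with i + j even through the reflection
   j \<mapsto> 1 - j of Y, which turns them into pairs with odd sum. *)

lemma alt_cycles_if_forward_propagates:
  assumes propagate: "\<And>i j. forward i j \<Longrightarrow> forward (i + 1) (if odd i = odd j then j + 1 else j - 1)"
    and X_nonsingular: "\<exists>i j j'. col (X i) (Y j) \<noteq> col (X i) (Y j')"
    and Y_nonsingular: "\<exists>i i' j. col (X i) (Y j) \<noteq> col (X i') (Y j)"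
    and l: "even l" "n + 3 \<le> l" "l \<le> 2 * m" and v: "v \<in> range X \<union> range Y"
  shows "\<exists>xs. alt_cycle col xs \<and> length xs = l \<and> v \<in> set xs"
proof -
  interpret R: alt_cycle_pair col n m X "\<lambda>j. Y (1 - j)" by (rule alt_cycle_pair_reflect)
  consider (odd_switch) s where "odd s" "forward 0 s" "\<not> forward 0 (s + 2)"
    | (even_switch) t where "even t" "forward 0 t" "\<not> forward 0 (t - 2)"
    | (no_switch) "\<And>s. odd s \<Longrightarrow> forward 0 s \<Longrightarrow> forward 0 (s + 2)"
        "\<And>t. even t \<Longrightarrow> forward 0 t \<Longrightarrow> forward 0 (t - 2)"
    by blast
  then show ?thesis
  proof cases
    case odd_switch
    show ?thesis by (rule alt_cycles_through_switch[OF forward_odd_profile[OF propagate] odd_switch l v])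
  next
    case even_switch
    have R_profile: "R.forward i j = R.forward 0 (i + j)" if "odd (i + j)" for i j
      using reflect_odd_profile[OF propagate that] .
    have R_switch: "odd (1 - t)" "R.forward 0 (1 - t)" "\<not> R.forward 0 (1 - t + 2)"
      using even_switch by (simp_all add: forward_reflect algebra_simps)
    have "range (\<lambda>j. Y (1 - j)) = Y ` range (\<lambda>j::int. 1 - j)" by (simp only: image_image)
    also have "range (\<lambda>j::int. 1 - j) = UNIV" by (rule surjI[where f = "\<lambda>j. 1 - j"]) simp
    finally have "v \<in> range X \<union> range (\<lambda>j. Y (1 - j))" using v by simp
    with R.alt_cycles_through_switch[OF R_profile R_switch l] show ?thesis by blast
  next
    case no_switch
    have "forward i j = (if odd (i + j) then forward 0 1 else forward 0 0)" for i j
      by (rule forward_parity_determined[OF propagate no_switch])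
    then have "(\<forall>i j j'. col (X i) (Y j) = col (X i) (Y j'))
        \<or> (\<forall>i i' j. col (X i) (Y j) = col (X i') (Y j))"
      by (rule exterior_color_one_sided)
    with X_nonsingular Y_nonsingular have False by blast
    then show ?thesis ..
  qed
qed

end

lemma non_singular_param:
  assumes "range X = A" "range Y = B" "\<exists>v\<in>A. non_singular col v B"
  shows "\<exists>i j j'. col (X i) (Y j) \<noteq> col (X i) (Y j')"
proof -
  obtain x y y' where "x \<in> A" "y \<in> B" "y' \<in> B" "col x y \<noteq> col x y'"
    using assms(3) unfolding non_singular_def by force
  then show ?thesis unfolding assms(1,2)[symmetric] by blast
qed

lemma alt_cycles_if_no_good_pair:
  assumes sym: "\<And>u v. col u v = col v u"
    and C1: "alt_cycle col C1" "length C1 = 2 * n" and C2: "alt_cycle col C2" "length C2 = 2 * m"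
    and disjoint: "set C1 \<inter> set C2 = {}"
    and exterior: "\<And>u w. u \<in> set C1 \<Longrightarrow> w \<in> set C2 \<Longrightarrow> col u w \<noteq> None"
    and ngp: "\<not> has_good_pair col C1 C2"
    and ns1: "\<exists>v\<in>set C1. non_singular col v (set C2)"
    and ns2: "\<exists>w\<in>set C2. non_singular col w (set C1)"
    and v: "v \<in> set C1 \<union> set C2" and l: "even l" "n + 3 \<le> l" "l \<le> 2 * m"
  shows "\<exists>xs. alt_cycle col xs \<and> length xs = l \<and> v \<in> set xs"
proof -
  obtain X where X: "alt_param col (2 * n) X" "range X = set C1"
    "\<And>i c. cyc_nbr col C1 c (X i) = (if c = parity_color (odd i) then X (i + 1) else X (i - 1))"
    using alt_cycle_obtain_param[OF C1(1) sym, unfolded C1(2)] by blast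
  obtain Y where Y: "alt_param col (2 * m) Y" "range Y = set C2"
    "\<And>j c. cyc_nbr col C2 c (Y j) = (if c = parity_color (odd j) then Y (j + 1) else Y (j - 1))"
    using alt_cycle_obtain_param[OF C2(1) sym, unfolded C2(2)] by blast
  have "0 < n" "0 < m" using C1 C2 unfolding alt_cycle_def by simp_all
  have in_C: "X i \<in> set C1" "Y j \<in> set C2" for i j using X(2) Y(2) by auto
  interpret alt_cycle_pair col n m X Y
  proof
    show "X i \<noteq> Y j" for i j using in_C(1)[of i] in_C(2)[of j] disjoint by (metis IntI empty_iff)
    show "col (X i) (Y j) \<noteq> None" for i j using in_C(1)[of i] in_C(2)[of j] by (rule exterior)
  qed (rule sym X(1) Y(1) \<open>0 < n\<close> \<open>0 < m\<close>)+
  show ?thesis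
  proof (rule alt_cycles_if_forward_propagates)
    show "forward (i + 1) (if odd i = odd j then j + 1 else j - 1)" if "forward i j" for i j
      by (rule forward_propagates_if_no_good_pair[OF ngp X(2) Y(2) X(3) Y(3) that])
    show "\<exists>i j j'. col (X i) (Y j) \<noteq> col (X i) (Y j')"
      by (rule non_singular_param[OF X(2) Y(2) ns1])
    obtain j i i' where "col (Y j) (X i) \<noteq> col (Y j) (X i')"
      using non_singular_param[OF Y(2) X(2) ns2] by blast
    then have "col (X i) (Y j) \<noteq> col (X i') (Y j)"
      by (simp add: sym[of "X i" "Y j"] sym[of "X i'" "Y j"])
    then show "\<exists>i i' j. col (X i) (Y j) \<noteq> col (X i') (Y j)" by blast
    show "even l" "n + 3 \<le> l" "l \<le> 2 * m" by (fact l)+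
    show "v \<in> range X \<union> range Y" using v X(2) Y(2) by simp
  qed
qed

section \<open>Colored generalized sums\<close>

lemma alt_cycle_cong:
  assumes "\<And>u v. u \<in> set xs \<Longrightarrow> v \<in> set xs \<Longrightarrow> col u v = col' u v"
  shows "alt_cycle col xs \<longleftrightarrow> alt_cycle col' xs"
proof (cases "xs = []")
  case False
  have eq: "col (xs ! (i mod length xs)) (xs ! (j mod length xs))
      = col' (xs ! (i mod length xs)) (xs ! (j mod length xs))" for i j
    using assms False by simp
  have eq': "col (xs ! i) (xs ! (j mod length xs)) = col' (xs ! i) (xs ! (j mod length xs))"
    if "i < length xs" for i j
    using eq[of i j] that by simp
  show ?thesis unfolding alt_cycle_def by (simp add: eq eq')
qed (simp add: alt_cycle_def)

lemma in_colored_sum_ham_alt_cycles: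
  assumes "ham_alt_cycle V1 col1 C1" "ham_alt_cycle V2 col2 C2" "in_colored_sum V col V1 col1 V2 col2"
  shows "\<And>u v. col u v = col v u" and "V = set C1 \<union> set C2"
    and "alt_cycle col C1" "alt_cycle col C2"
    and "\<And>u w. u \<in> set C1 \<Longrightarrow> w \<in> set C2 \<Longrightarrow> col u w \<noteq> None"
  using assms alt_cycle_cong[of C1 col col1] alt_cycle_cong[of C2 col col2]
  unfolding in_colored_sum_def cgraph_def ham_alt_cycle_def by blast+

lemma has_good_pair_swap:
  assumes sym: "\<And>u v. col u v = col v u" and "has_good_pair col C2 C1"
  shows "has_good_pair col C1 C2"
proof -
  obtain w v c where "w \<in> set C2" "v \<in> set C1" "col w v = Some c"
    "col (cyc_nbr col C2 c w) (cyc_nbr col C1 c v) = Some c"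
    using assms(2) unfolding has_good_pair_def by blast
  moreover from this have "col v w = Some c" "col (cyc_nbr col C1 c v) (cyc_nbr col C2 c w) = Some c"
    by (simp_all add: sym[of v] sym[of "cyc_nbr col C1 c v"])
  ultimately show ?thesis unfolding has_good_pair_def by blast
qed

theorem proposition3p12:
  fixes V1 V2 V :: "'a set"
    and col1 col2 col :: "'a \<Rightarrow> 'a \<Rightarrow> color option"
    and C1 C2 :: "'a list" and n m :: nat
  assumes "cgraph V1 col1" and "cgraph V2 col2" and "V1 \<inter> V2 = {}"
    and "ham_alt_cycle V1 col1 C1" and "length C1 = 2 * n"
    and "ham_alt_cycle V2 col2 C2" and "length C2 = 2 * m"
    and "in_colored_sum V col V1 col1 V2 col2"
    and "\<not> has_good_pair col C1 C2"
    and "\<exists>v\<in>set C1. non_singular col v (set C2)"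
    and "\<exists>w\<in>set C2. non_singular col w (set C1)"
  shows "\<forall>v\<in>V. \<forall>l. even l \<and> 4 * min n m \<le> l \<and> l \<le> 2 * max n m \<longrightarrow>
           (\<exists>xs. alt_cycle col xs \<and> length xs = l \<and> v \<in> set xs)"
proof (intro ballI allI impI)
  fix v l assume "v \<in> V" and l: "even l \<and> 4 * min n m \<le> l \<and> l \<le> 2 * max n m"
  note sum = in_colored_sum_ham_alt_cycles[OF assms(4,6,8)]
  have v: "v \<in> set C1 \<union> set C2" "v \<in> set C2 \<union> set C1" using \<open>v \<in> V\<close> sum(2) by auto
  have disjoint: "set C1 \<inter> set C2 = {}" "set C2 \<inter> set C1 = {}"
    using assms(3,4,6) by (auto simp: ham_alt_cycle_def)
  have "0 < n" "0 < m" using sum(3,4) assms(5,7) unfolding alt_cycle_def by simp_all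
  show "\<exists>xs. alt_cycle col xs \<and> length xs = l \<and> v \<in> set xs"
  proof (cases "n \<le> m")
    case True
    with l \<open>0 < n\<close> show ?thesis
      by (intro alt_cycles_if_no_good_pair[OF sum(1,3) assms(5) sum(4) assms(7) disjoint(1) sum(5)
          assms(9-11) v(1)]) auto
  next
    case False
    have "\<not> has_good_pair col C2 C1" using has_good_pair_swap[of col C2 C1, OF sum(1)] assms(9) by blast
    moreover have "col w u \<noteq> None" if "w \<in> set C2" "u \<in> set C1" for w u
      using sum(5)[OF that(2,1)] sum(1)[of w u] by simp
    ultimately show ?thesis using False l \<open>0 < m\<close>
      by (intro alt_cycles_if_no_good_pair[OF sum(1,4) assms(7) sum(3) assms(5) disjoint(2)]
          assms(11,10) v(2)) auto
  qed
qed

end
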